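(* For every dual quaternion $\hat a\in\hat{\mathbb Q}$ there exist a unit dual quaternion $\hat q\in\hat{\mathbb U}$ and a dual complex number $\hat\lambda\in\mathbb{DC}$ such that $\hat q^*\hat a\hat q=\hat\lambda$.
   Context: $\mathbb{Q}$ denotes the real quaternions with units $i,j,k$; complex numbers are identified with quaternions $a+bi$. $\varepsilon$ satisfies $\varepsilon\ne0$, $\varepsilon^2=0$ and commutes with quaternions. A dual quaternion is $\hat p=\tilde p_{st}+\tilde p_{\mathcal I}\varepsilon$ with $\tilde p_{st},\tilde p_{\mathcal I}\in\mathbb Q$; its conjugate is $\hat p^*=\tilde p_{st}^*+\tilde p_{\mathcal I}^*\varepsilon$. $\mathbb{DC}$ is the set of dual complex numbers $a_{st}+a_{\mathcal I}\varepsilon$ with $a_{st},a_{\mathcal I}\in\mathbb C$. The absolute value of $\hat p$ is $|\tilde p_{st}|+\frac{\mathrm{sc}(\tilde p_{st}^*\tilde p_{\mathcal I})}{|\tilde p_{st}|}\varepsilon$ if $\tilde p_{st}\neq0$ and $|\tilde p_{\mathcal I}|\varepsilon$ otherwise, with $\mathrm{sc}(\tilde p)=\frac12(\tilde p+\tilde p^* )$; $\hat p$ is a unit dual quaternion if $|\hat p|=1$ (equivalently $\hat p^*\hat p=\hat p\hat p^*=1$). $\hat{\mathbb U}$ is the set of unit dual quaternions. *)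

theory Defs
  imports Complex_Main
begin

datatype quat = Quat (qre: real) (qi: real) (qj: real) (qk: real)

definition qmult :: "quat \<Rightarrow> quat \<Rightarrow> quat" where
  "qmult p q = Quat
     (qre p * qre q - qi p * qi q - qj p * qj q - qk p * qk q)
     (qre p * qi q + qi p * qre q + qj p * qk q - qk p * qj q)
     (qre p * qj q - qi p * qk q + qj p * qre q + qk p * qi q)
     (qre p * qk q + qi p * qj q - qj p * qi q + qk p * qre q)"

definition qadd :: "quat \<Rightarrow> quat \<Rightarrow> quat" where
  "qadd p q = Quat (qre p + qre q) (qi p + qi q) (qj p + qj q) (qk p + qk q)"

definition qcnj :: "quat \<Rightarrow> quat" where
  "qcnj p = Quat (qre p) (- qi p) (- qj p) (- qk p)"

definition qzero :: quat where "qzero = Quat 0 0 0 0"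

definition qnorm :: "quat \<Rightarrow> real" where
  "qnorm p = sqrt ((qre p)\<^sup>2 + (qi p)\<^sup>2 + (qj p)\<^sup>2 + (qk p)\<^sup>2)"

text \<open>Scalar part sc(p) = (p + p^*)/2, i.e. the real part.\<close>
definition qsc :: "quat \<Rightarrow> real" where
  "qsc p = qre p"

definition is_complex_quat :: "quat \<Rightarrow> bool" where
  "is_complex_quat p \<longleftrightarrow> qj p = 0 \<and> qk p = 0"

text \<open>Dual quaternions p_st + p_I \<epsilon>.\<close>
datatype dquat = DQ (dst: quat) (dinf: quat)

definition dqmult :: "dquat \<Rightarrow> dquat \<Rightarrow> dquat" where
  "dqmult p q = DQ (qmult (dst p) (dst q))
                   (qadd (qmult (dst p) (dinf q)) (qmult (dinf p) (dst q)))"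

definition dqcnj :: "dquat \<Rightarrow> dquat" where
  "dqcnj p = DQ (qcnj (dst p)) (qcnj (dinf p))"

text \<open>Absolute value of a dual quaternion, a dual number given as (standard part, infinitesimal part).\<close>
definition dqabs :: "dquat \<Rightarrow> real \<times> real" where
  "dqabs p = (if dst p \<noteq> qzero
     then (qnorm (dst p), qsc (qmult (qcnj (dst p)) (dinf p)) / qnorm (dst p))
     else (0, qnorm (dinf p)))"

definition unit_dquat :: "dquat \<Rightarrow> bool" where
  "unit_dquat p \<longleftrightarrow> dqabs p = (1, 0)"

definition is_dual_complex :: "dquat \<Rightarrow> bool" where
  "is_dual_complex p \<longleftrightarrow> is_complex_quat (dst p) \<and> is_complex_quat (dinf p)"

end

theory Submission
  imports Defs
begin

text \<open>
  Conjugation by a unit quaternion p rotates the vector part of a quaternion, so a suitable p makes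
  the standard part a0 of a = a0 + a1 \<epsilon> complex, say x + y i. Conjugation by 1 + r \<epsilon> with r pure
  keeps the standard part and adds the commutator [x + y i, r] to the dual part. If y \<noteq> 0, this
  commutator ranges over all of span(j, k) and cancels the non-complex part of the dual part;
  if y = 0, the standard part is real and a further rotation makes the dual part complex.
\<close>

definition qone :: quat where "qone = Quat 1 0 0 0"

definition qconj_by :: "quat \<Rightarrow> quat \<Rightarrow> quat" where
  "qconj_by p a = qmult (qmult (qcnj p) a) p"

definition dqconj_by :: "dquat \<Rightarrow> dquat \<Rightarrow> dquat" where
  "dqconj_by q a = dqmult (dqmult (dqcnj q) a) q"

lemma quat_eqI:
  "qre p = qre q \<Longrightarrow> qi p = qi q \<Longrightarrow> qj p = qj q \<Longrightarrow> qk p = qk q \<Longrightarrow> p = q"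
  by (cases p; cases q) auto

lemma qmult_assoc: "qmult (qmult p q) r = qmult p (qmult q r)"
  by (rule quat_eqI; simp add: qmult_def algebra_simps)

lemma qmult_qadd_left: "qmult (qadd p q) r = qadd (qmult p r) (qmult q r)"
  by (rule quat_eqI; simp add: qmult_def qadd_def algebra_simps)

lemma qmult_qadd_right: "qmult r (qadd p q) = qadd (qmult r p) (qmult r q)"
  by (rule quat_eqI; simp add: qmult_def qadd_def algebra_simps)

lemma qadd_assoc: "qadd (qadd p q) r = qadd p (qadd q r)"
  by (simp add: qadd_def)

lemma qcnj_qmult: "qcnj (qmult p q) = qmult (qcnj q) (qcnj p)"
  by (rule quat_eqI; simp add: qmult_def qcnj_def algebra_simps)

lemma qcnj_qadd: "qcnj (qadd p q) = qadd (qcnj p) (qcnj q)"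
  by (simp add: qadd_def qcnj_def)

lemma qmult_qone [simp]: "qmult p qone = p" "qmult qone p = p"
  by (rule quat_eqI; simp add: qmult_def qone_def)+

lemma qmult_qzero [simp]: "qmult p qzero = qzero" "qmult qzero p = qzero"
  by (simp_all add: qmult_def qzero_def)

lemma qadd_qzero [simp]: "qadd p qzero = p" "qadd qzero p = p"
  by (simp_all add: qadd_def qzero_def)

lemma qcnj_qone [simp]: "qcnj qone = qone" and qcnj_qzero [simp]: "qcnj qzero = qzero"
  by (simp_all add: qcnj_def qone_def qzero_def)

lemma qmult_qcnj_self: "qmult (qcnj p) p = Quat ((qnorm p)\<^sup>2) 0 0 0"
  by (simp add: qmult_def qcnj_def qnorm_def power2_eq_square algebra_simps)

lemma qadd_qmult_qcnj_eq_qsc: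
  "qadd (qmult (qcnj p) r) (qmult (qcnj r) p) = Quat (2 * qsc (qmult (qcnj p) r)) 0 0 0"
  by (simp add: qadd_def qmult_def qcnj_def qsc_def algebra_simps)

lemma qnorm_nonneg: "qnorm p \<ge> 0"
  by (simp add: qnorm_def)

lemma qnorm_eq_0_iff: "qnorm p = 0 \<longleftrightarrow> p = qzero"
  by (cases p) (simp add: qnorm_def qzero_def add_nonneg_eq_0_iff)

lemma dqmult_assoc: "dqmult (dqmult p q) r = dqmult p (dqmult q r)"
  by (simp add: dqmult_def qmult_assoc qmult_qadd_left qmult_qadd_right qadd_assoc)

lemma dqcnj_dqmult: "dqcnj (dqmult p q) = dqmult (dqcnj q) (dqcnj p)"
  by (simp add: dqmult_def dqcnj_def qcnj_qmult qcnj_qadd) (simp add: qadd_def algebra_simps)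

lemma dqconj_by_dqmult: "dqconj_by (dqmult q1 q2) a = dqconj_by q2 (dqconj_by q1 a)"
  by (simp add: dqconj_by_def dqcnj_dqmult dqmult_assoc)

lemma unit_dquat_iff: "unit_dquat q \<longleftrightarrow> dqmult (dqcnj q) q = DQ qone qzero"
proof (cases "dst q = qzero")
  case True
  then show ?thesis
    by (simp add: unit_dquat_def dqabs_def dqmult_def dqcnj_def) (simp add: qone_def qzero_def)
next
  case False
  then have "qnorm (dst q) \<noteq> 0"
    by (simp add: qnorm_eq_0_iff)
  with False show ?thesis
    using qnorm_nonneg[of "dst q"]
    by (auto simp: unit_dquat_def dqabs_def dqmult_def dqcnj_def qmult_qcnj_self
        qadd_qmult_qcnj_eq_qsc qone_def qzero_def power2_eq_1_iff)
qed

lemma dqmult_DQ_qone_qzero [simp]: "dqmult (DQ qone qzero) q = q" "dqmult q (DQ qone qzero) = q"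
  by (simp_all add: dqmult_def)

lemma unit_dquat_dqmult:
  assumes "unit_dquat p" and "unit_dquat q"
  shows "unit_dquat (dqmult p q)"
proof -
  have "dqmult (dqcnj (dqmult p q)) (dqmult p q) = dqmult (dqcnj q) (dqmult (dqmult (dqcnj p) p) q)"
    by (simp add: dqcnj_dqmult dqmult_assoc)
  also have "\<dots> = DQ qone qzero"
    using assms by (simp add: unit_dquat_iff)
  finally show ?thesis
    by (simp add: unit_dquat_iff)
qed

lemma unit_dquat_DQ_qzero: "qnorm p = 1 \<Longrightarrow> unit_dquat (DQ p qzero)"
  by (simp add: unit_dquat_iff dqmult_def dqcnj_def qmult_qcnj_self qone_def)

lemma unit_dquat_DQ_qone: "qre r = 0 \<Longrightarrow> unit_dquat (DQ qone r)"
  by (simp add: unit_dquat_iff dqmult_def dqcnj_def) (simp add: qadd_def qcnj_def qzero_def)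

lemma dqconj_by_DQ_qzero: "dqconj_by (DQ p qzero) (DQ a0 a1) = DQ (qconj_by p a0) (qconj_by p a1)"
  by (simp add: dqconj_by_def qconj_by_def dqmult_def dqcnj_def)

lemma dqconj_by_DQ_qone:
  "dqconj_by (DQ qone r) (DQ b0 b1) = DQ b0 (qadd (qmult b0 r) (qadd b1 (qmult (qcnj r) b0)))"
  by (simp add: dqconj_by_def dqmult_def dqcnj_def qmult_qadd_left qadd_assoc)

lemma qconj_by_real:
  assumes "qnorm p = 1"
  shows "qconj_by p (Quat x 0 0 0) = Quat x 0 0 0"
proof -
  have "qmult (Quat x 0 0 0) p = qmult p (Quat x 0 0 0)"
    by (simp add: qmult_def)
  then have "qconj_by p (Quat x 0 0 0) = qmult (qmult (qcnj p) p) (Quat x 0 0 0)"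
    by (simp add: qconj_by_def qmult_assoc)
  then show ?thesis
    using assms by (simp add: qmult_qcnj_self flip: qone_def)
qed

lemma ex_qconj_by_complex: "\<exists>p. qnorm p = 1 \<and> is_complex_quat (qconj_by p a)"
proof (cases "is_complex_quat a")
  case True
  then show ?thesis
    by (intro exI[of _ qone]) (simp add: qconj_by_def, simp add: qnorm_def qone_def)
next
  case False
  obtain x v1 v2 v3 where a: "a = Quat x v1 v2 v3"
    by (cases a)
  define n where "n = sqrt (v1\<^sup>2 + v2\<^sup>2 + v3\<^sup>2)"
  have n2: "n\<^sup>2 = v1\<^sup>2 + v2\<^sup>2 + v3\<^sup>2"
    unfolding n_def by simp
  have "v2\<^sup>2 + v3\<^sup>2 > 0"
    using False by (simp add: a is_complex_quat_def sum_power2_gt_zero_iff)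
  then have "\<bar>v1\<bar> < n"
    unfolding n_def using real_sqrt_less_mono[of "v1\<^sup>2"] by simp
  then have N_pos: "(n + v1)\<^sup>2 + v2\<^sup>2 + v3\<^sup>2 > 0"
    by (simp add: add_pos_nonneg)
  define c where "c = 1 / sqrt ((n + v1)\<^sup>2 + v2\<^sup>2 + v3\<^sup>2)"
  \<comment> \<open>p is a positive multiple of n - v i, where v = v1 i + v2 j + v3 k and n = |v|:
      the half-angle rotation carrying v to n i.\<close>
  define p where "p = Quat (c * (n + v1)) 0 (- c * v3) (c * v2)"
  have "qnorm p = sqrt (c\<^sup>2 * ((n + v1)\<^sup>2 + v2\<^sup>2 + v3\<^sup>2))"
    by (simp add: p_def qnorm_def power2_eq_square algebra_simps)
  also have "\<dots> = 1"
    using N_pos by (simp add: c_def power_divide)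
  finally have "qnorm p = 1" .
  moreover have "is_complex_quat (qconj_by p a)"
    using n2 by (simp add: a p_def qconj_by_def is_complex_quat_def qmult_def qcnj_def; algebra)
  ultimately show ?thesis
    by blast
qed

lemma ex_pure_quat_complex_dual_part:
  assumes "is_complex_quat b0" and "qi b0 \<noteq> 0"
  shows "\<exists>r. qre r = 0 \<and> is_complex_quat (qadd (qmult b0 r) (qadd b1 (qmult (qcnj r) b0)))"
proof -
  \<comment> \<open>For pure r the dual part is b1 + b0 r - r b0, and the commutator of y i with
      s j + t k is 2 y (s k - t j), so r can cancel the j- and k-parts of b1.\<close>
  define y where "y = qi b0"
  define r where "r = Quat 0 0 (- qk b1 / (2 * y)) (qj b1 / (2 * y))"
  have "is_complex_quat (qadd (qmult b0 r) (qadd b1 (qmult (qcnj r) b0)))"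
    using assms by (simp add: r_def y_def is_complex_quat_def qmult_def qadd_def qcnj_def field_simps)
  then show ?thesis
    by (intro exI[of _ r]) (simp add: r_def)
qed

lemma ex_dqconj_by_dual_complex_of_complex_dst:
  assumes b0: "is_complex_quat b0"
  shows "\<exists>q. unit_dquat q \<and> is_dual_complex (dqconj_by q (DQ b0 b1))"
proof (cases "qi b0 = 0")
  case True
  \<comment> \<open>b0 is real, so it commutes with everything and only b1 needs to be rotated.\<close>
  then have b0_real: "b0 = Quat (qre b0) 0 0 0"
    using b0 by (cases b0) (simp add: is_complex_quat_def)
  obtain p where "qnorm p = 1" and "is_complex_quat (qconj_by p b1)"
    using ex_qconj_by_complex by blast
  then have "is_dual_complex (dqconj_by (DQ p qzero) (DQ b0 b1))"
    using b0 b0_real qconj_by_real[of p "qre b0"]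
    by (simp add: dqconj_by_DQ_qzero is_dual_complex_def)
  with \<open>qnorm p = 1\<close> show ?thesis
    using unit_dquat_DQ_qzero by blast
next
  case False
  then obtain r where "qre r = 0"
    and "is_complex_quat (qadd (qmult b0 r) (qadd b1 (qmult (qcnj r) b0)))"
    using ex_pure_quat_complex_dual_part b0 by blast
  then show ?thesis
    using b0 unit_dquat_DQ_qone
    by (intro exI[of _ "DQ qone r"]) (simp add: dqconj_by_DQ_qone is_dual_complex_def)
qed

theorem lemma3p3:
  fixes a :: dquat
  shows "\<exists>q lam. unit_dquat q \<and> is_dual_complex lam \<and>
           dqmult (dqmult (dqcnj q) a) q = lam"
proof -
  obtain a0 a1 where a: "a = DQ a0 a1"
    by (cases a)
  obtain p where p: "qnorm p = 1" and "is_complex_quat (qconj_by p a0)"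
    using ex_qconj_by_complex by blast
  then obtain q where q: "unit_dquat q"
    and "is_dual_complex (dqconj_by q (DQ (qconj_by p a0) (qconj_by p a1)))"
    using ex_dqconj_by_dual_complex_of_complex_dst by blast
  then have "is_dual_complex (dqconj_by (dqmult (DQ p qzero) q) a)"
    by (simp add: a dqconj_by_dqmult dqconj_by_DQ_qzero)
  moreover have "unit_dquat (dqmult (DQ p qzero) q)"
    using p q by (simp add: unit_dquat_DQ_qzero unit_dquat_dqmult)
  ultimately show ?thesis
    unfolding dqconj_by_def by blast
qed

end
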